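(* For every infinite ordinal $\alpha$, $TA_\alpha=PTA_\alpha$; that is, the models of $\Sigma_\alpha$ are exactly the members of the variety generated by the algebras $\wp(V)$ with $V\subseteq{}^\alpha\alpha^{(Id)}$ permutable.
   Context: ${}^\alpha\alpha^{(Id)}=\{s\in{}^\alpha\alpha:|\{i:s_i\neq i\}|<\omega\}$. $V$ is permutable if $s\circ[i,j]\in V$ for all $s\in V$, $i\neq j<\alpha$, where $[i,j]$ swaps $i$ and $j$. $\wp(V)=\langle\mathcal P(V);\cap,-,S_{ij}\rangle_{i\neq j<\alpha}$ with complement relative to $V$ and $S_{ij}(X)=\{q\in V:q\circ[i,j]\in X\}$. $PTA_\alpha$ is the variety generated by all such $\wp(V)$. $\Sigma_\alpha$ (signature $\wedge,-,s_{ij}$, $i\neq j<\alpha$) consists of the Boolean algebra axioms, the equations saying each $s_{ij}$ is a Boolean endomorphism, and $t_1(x)=t_2(x)$ for all finite words $t_1,t_2$ in the $s_{ij}$ whose associated compositions of transpositions coincide; $TA_\alpha=\mathbf{Mod}(\Sigma_\alpha)$. *)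

theory Defs
  imports Main
begin

text \<open>The ordinal alpha is represented by an index type 'i (only the
underlying set of alpha matters for these algebras).\<close>

definition transp :: "'i \<Rightarrow> 'i \<Rightarrow> 'i \<Rightarrow> 'i" where
  "transp i j = id(i := j, j := i)"

record ('i, 'b) talg =
  carrier :: "'b set"
  mt :: "'b \<Rightarrow> 'b \<Rightarrow> 'b"
  cp :: "'b \<Rightarrow> 'b"
  sb :: "'i \<Rightarrow> 'i \<Rightarrow> 'b \<Rightarrow> 'b"

definition talg_wf :: "('i, 'b) talg \<Rightarrow> bool" where
  "talg_wf A \<longleftrightarrow> carrier A \<noteq> {} \<and>
     (\<forall>x\<in>carrier A. \<forall>y\<in>carrier A. mt A x y \<in> carrier A) \<and>
     (\<forall>x\<in>carrier A. cp A x \<in> carrier A) \<and>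
     (\<forall>i j. i \<noteq> j \<longrightarrow> (\<forall>x\<in>carrier A. sb A i j x \<in> carrier A))"

datatype 'i trm = Var nat | Mt "'i trm" "'i trm" | Cp "'i trm" | Sb 'i 'i "'i trm"

fun wf_trm :: "'i trm \<Rightarrow> bool" where
  "wf_trm (Var n) = True"
| "wf_trm (Mt s t) = (wf_trm s \<and> wf_trm t)"
| "wf_trm (Cp t) = wf_trm t"
| "wf_trm (Sb i j t) = (i \<noteq> j \<and> wf_trm t)"

fun eval :: "('i, 'b) talg \<Rightarrow> (nat \<Rightarrow> 'b) \<Rightarrow> 'i trm \<Rightarrow> 'b" where
  "eval A \<sigma> (Var n) = \<sigma> n"
| "eval A \<sigma> (Mt s t) = mt A (eval A \<sigma> s) (eval A \<sigma> t)"
| "eval A \<sigma> (Cp t) = cp A (eval A \<sigma> t)"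
| "eval A \<sigma> (Sb i j t) = sb A i j (eval A \<sigma> t)"

definition holds :: "('i, 'b) talg \<Rightarrow> 'i trm \<Rightarrow> 'i trm \<Rightarrow> bool" where
  "holds A t1 t2 \<longleftrightarrow> (\<forall>\<sigma>. (\<forall>n. \<sigma> n \<in> carrier A) \<longrightarrow> eval A \<sigma> t1 = eval A \<sigma> t2)"

definition finitary :: "('i \<Rightarrow> 'i) set" where
  "finitary = {s. finite {i. s i \<noteq> i}}"

definition permutable :: "('i \<Rightarrow> 'i) set \<Rightarrow> bool" where
  "permutable V \<longleftrightarrow> (\<forall>s\<in>V. \<forall>i j. i \<noteq> j \<longrightarrow> s \<circ> transp i j \<in> V)"

definition wp :: "('i \<Rightarrow> 'i) set \<Rightarrow> ('i, ('i \<Rightarrow> 'i) set) talg" where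
  "wp V = \<lparr> carrier = Pow V, mt = (\<lambda>X Y. X \<inter> Y), cp = (\<lambda>X. V - X),
           sb = (\<lambda>i j X. {q \<in> V. q \<circ> transp i j \<in> X}) \<rparr>"

text \<open>PTA_alpha: the variety generated by all wp(V), V \<subseteq> finitary permutable,
  i.e. the class of algebras satisfying every equation valid in all these wp(V).\<close>
definition PTA :: "('i, 'b) talg set" where
  "PTA = {A. talg_wf A \<and>
     (\<forall>t1 t2. wf_trm t1 \<and> wf_trm t2 \<and>
        (\<forall>V::('i \<Rightarrow> 'i) set. V \<subseteq> finitary \<and> permutable V \<longrightarrow> holds (wp V) t1 t2)
        \<longrightarrow> holds A t1 t2)}"

definition jn :: "('i, 'b) talg \<Rightarrow> 'b \<Rightarrow> 'b \<Rightarrow> 'b" where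
  "jn A x y = cp A (mt A (cp A x) (cp A y))"

definition boolean_ax :: "('i, 'b) talg \<Rightarrow> bool" where
  "boolean_ax A \<longleftrightarrow> (\<forall>x\<in>carrier A. \<forall>y\<in>carrier A. \<forall>z\<in>carrier A.
      mt A x y = mt A y x \<and> jn A x y = jn A y x \<and>
      mt A (mt A x y) z = mt A x (mt A y z) \<and> jn A (jn A x y) z = jn A x (jn A y z) \<and>
      mt A x (jn A x y) = x \<and> jn A x (mt A x y) = x \<and>
      mt A x (jn A y z) = jn A (mt A x y) (mt A x z) \<and>
      mt A x (cp A x) = mt A y (cp A y) \<and> jn A x (cp A x) = jn A y (cp A y) \<and>
      mt A (mt A x (cp A x)) y = mt A x (cp A x) \<and>
      mt A (jn A x (cp A x)) y = y)"

definition endo_ax :: "('i, 'b) talg \<Rightarrow> bool" where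
  "endo_ax A \<longleftrightarrow> (\<forall>i j. i \<noteq> j \<longrightarrow> (\<forall>x\<in>carrier A. \<forall>y\<in>carrier A.
      sb A i j (mt A x y) = mt A (sb A i j x) (sb A i j y) \<and>
      sb A i j (cp A x) = cp A (sb A i j x)))"

definition word_ok :: "('i \<times> 'i) list \<Rightarrow> bool" where
  "word_ok w \<longleftrightarrow> (\<forall>(i, j)\<in>set w. i \<noteq> j)"

definition word_app :: "('i, 'b) talg \<Rightarrow> ('i \<times> 'i) list \<Rightarrow> 'b \<Rightarrow> 'b" where
  "word_app A w x = foldr (\<lambda>(i, j) y. sb A i j y) w x"

definition word_perm :: "('i \<times> 'i) list \<Rightarrow> 'i \<Rightarrow> 'i" where
  "word_perm w = foldr (\<lambda>(i, j) f. transp i j \<circ> f) w id"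

definition word_ax :: "('i, 'b) talg \<Rightarrow> bool" where
  "word_ax A \<longleftrightarrow> (\<forall>w1 w2. word_ok w1 \<and> word_ok w2 \<and> word_perm w1 = word_perm w2 \<longrightarrow>
      (\<forall>x\<in>carrier A. word_app A w1 x = word_app A w2 x))"

definition TA :: "('i, 'b) talg set" where
  "TA = {A. talg_wf A \<and> boolean_ax A \<and> endo_ax A \<and> word_ax A}"

end

theory Submission
  imports Defs
begin

text \<open>Every axiom of Sigma is an equation valid in each wp(V) with V permutable, so
  PTA is contained in TA. Conversely, let A be a model of Sigma. The word axioms make
  s_q = s_{i1 j1} ... s_{in jn} well defined for every product q = [i1,j1] o ... o [in,jn]
  of transpositions, the set W of these products is permutable and finitary, and each s_q
  is a Boolean endomorphism of A. For a Boolean homomorphism f from A to the two-element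
  algebra (the indicator of an ultrafilter), x maps to {q in W. f (s_q x)} is a homomorphism
  from A into wp(W), and since id is in W it remembers f. Ultrafilters separate the points
  of A, so an equation failing in A fails in wp(W).\<close>

section \<open>Boolean algebras on a carrier\<close>

definition bool_hom :: "('i, 'b) talg \<Rightarrow> ('b \<Rightarrow> bool) \<Rightarrow> bool" where
  "bool_hom A f \<longleftrightarrow>
     (\<forall>x\<in>carrier A. \<forall>y\<in>carrier A. f (mt A x y) = (f x \<and> f y)) \<and>
     (\<forall>x\<in>carrier A. f (cp A x) = (\<not> f x))"

locale boolean_talg =
  fixes A :: "('i, 'b) talg"
  assumes wf: "talg_wf A" and laws: "boolean_ax A"
begin

lemma carrier_nonempty: "carrier A \<noteq> {}"
  using wf by (simp add: talg_wf_def)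

lemma mt_closed: "x \<in> carrier A \<Longrightarrow> y \<in> carrier A \<Longrightarrow> mt A x y \<in> carrier A"
  using wf by (simp add: talg_wf_def)

lemma cp_closed: "x \<in> carrier A \<Longrightarrow> cp A x \<in> carrier A"
  using wf by (simp add: talg_wf_def)

lemma jn_closed: "x \<in> carrier A \<Longrightarrow> y \<in> carrier A \<Longrightarrow> jn A x y \<in> carrier A"
  by (simp add: jn_def mt_closed cp_closed)

lemmas carrier_closed = mt_closed cp_closed jn_closed

lemma boolean_law:
  assumes "x \<in> carrier A" "y \<in> carrier A" "z \<in> carrier A"
  shows "mt A x y = mt A y x" and "jn A x y = jn A y x"
    and "mt A (mt A x y) z = mt A x (mt A y z)"
    and "mt A x (jn A x y) = x" and "jn A x (mt A x y) = x"
    and "mt A x (jn A y z) = jn A (mt A x y) (mt A x z)"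
    and "mt A x (cp A x) = mt A y (cp A y)" and "jn A x (cp A x) = jn A y (cp A y)"
    and "mt A (mt A x (cp A x)) y = mt A x (cp A x)" and "mt A (jn A x (cp A x)) y = y"
  using laws[unfolded boolean_ax_def, rule_format, OF assms] by blast+

lemma mt_comm: "x \<in> carrier A \<Longrightarrow> y \<in> carrier A \<Longrightarrow> mt A x y = mt A y x"
  using boolean_law(1) by blast

lemma jn_comm: "x \<in> carrier A \<Longrightarrow> y \<in> carrier A \<Longrightarrow> jn A x y = jn A y x"
  using boolean_law(2) by blast

lemmas mt_assoc = boolean_law(3)

lemma mt_jn_absorb: "x \<in> carrier A \<Longrightarrow> y \<in> carrier A \<Longrightarrow> mt A x (jn A x y) = x"
  using boolean_law(4) by blast

lemma jn_mt_absorb: "x \<in> carrier A \<Longrightarrow> y \<in> carrier A \<Longrightarrow> jn A x (mt A x y) = x"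
  using boolean_law(5) by blast

lemmas mt_jn_distrib = boolean_law(6)

lemma mt_idem: "x \<in> carrier A \<Longrightarrow> mt A x x = x"
  by (metis mt_jn_absorb jn_mt_absorb mt_closed)

lemma mt_left_commute:
  "x \<in> carrier A \<Longrightarrow> y \<in> carrier A \<Longrightarrow> z \<in> carrier A \<Longrightarrow> mt A x (mt A y z) = mt A y (mt A x z)"
  by (metis mt_assoc mt_comm)

lemma mt_left_idem: "x \<in> carrier A \<Longrightarrow> y \<in> carrier A \<Longrightarrow> mt A x (mt A x y) = mt A x y"
  by (metis mt_assoc mt_idem)

lemmas mt_ac = mt_assoc mt_comm mt_left_commute mt_left_idem mt_idem mt_closed

definition bot_el :: 'b where
  "bot_el = (let x = SOME x. x \<in> carrier A in mt A x (cp A x))"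

definition top_el :: 'b where
  "top_el = (let x = SOME x. x \<in> carrier A in jn A x (cp A x))"

lemma some_in_carrier: "(SOME x. x \<in> carrier A) \<in> carrier A"
  using carrier_nonempty by (simp add: some_in_eq)

lemma mt_cp_self: "x \<in> carrier A \<Longrightarrow> mt A x (cp A x) = bot_el"
  using boolean_law(7)[OF _ some_in_carrier] by (simp add: bot_el_def Let_def)

lemma jn_cp_self: "x \<in> carrier A \<Longrightarrow> jn A x (cp A x) = top_el"
  using boolean_law(8)[OF _ some_in_carrier] by (simp add: top_el_def Let_def)

lemma bot_closed: "bot_el \<in> carrier A"
  using mt_cp_self[OF some_in_carrier] some_in_carrier by (metis carrier_closed)

lemma top_closed: "top_el \<in> carrier A"
  using jn_cp_self[OF some_in_carrier] some_in_carrier by (metis carrier_closed)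

lemma bot_mt: "y \<in> carrier A \<Longrightarrow> mt A bot_el y = bot_el"
  using boolean_law(9)[OF some_in_carrier] mt_cp_self[OF some_in_carrier] by simp

lemma top_mt: "y \<in> carrier A \<Longrightarrow> mt A top_el y = y"
  using boolean_law(10)[OF some_in_carrier] jn_cp_self[OF some_in_carrier] by simp

lemma bot_jn: "y \<in> carrier A \<Longrightarrow> jn A bot_el y = y"
  by (metis jn_comm jn_mt_absorb mt_cp_self cp_closed bot_closed)

lemma mt_cp_if_disjoint:
  assumes a: "a \<in> carrier A" and x: "x \<in> carrier A" and disj: "mt A a x = bot_el"
  shows "mt A a (cp A x) = a"
proof -
  have "a = mt A a (jn A x (cp A x))"
    using a x top_mt mt_comm top_closed by (simp add: jn_cp_self)
  also have "\<dots> = jn A (mt A a x) (mt A a (cp A x))"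
    using a x by (simp add: mt_jn_distrib carrier_closed)
  also have "\<dots> = mt A a (cp A x)"
    using a x disj by (simp add: bot_jn carrier_closed)
  finally show ?thesis by simp
qed

lemma cp_cp:
  assumes x: "x \<in> carrier A"
  shows "cp A (cp A x) = x"
proof -
  have "cp A (cp A x) = mt A (cp A (cp A x)) (jn A x (cp A x))"
    using x by (metis top_mt mt_comm top_closed jn_cp_self carrier_closed)
  also have "\<dots> = jn A (mt A (cp A (cp A x)) x) bot_el"
    using x by (simp add: mt_jn_distrib mt_comm mt_cp_self carrier_closed)
  also have "\<dots> = mt A x (cp A (cp A x))"
    using x by (simp add: jn_comm bot_jn mt_comm carrier_closed bot_closed)
  also have "\<dots> = x"
    using x mt_cp_if_disjoint[of x "cp A x"] by (simp add: mt_cp_self carrier_closed)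
  finally show ?thesis .
qed

lemma distinct_imp_mt_cp_nonbot:
  assumes "a \<in> carrier A" "b \<in> carrier A" "a \<noteq> b"
  shows "mt A a (cp A b) \<noteq> bot_el \<or> mt A b (cp A a) \<noteq> bot_el"
  using assms mt_cp_if_disjoint[of a "cp A b"] mt_cp_if_disjoint[of b "cp A a"]
  by (metis cp_cp cp_closed mt_comm)

definition proper_filter :: "'b set \<Rightarrow> bool" where
  "proper_filter F \<longleftrightarrow> F \<subseteq> carrier A \<and> (\<forall>x\<in>F. \<forall>y\<in>F. mt A x y \<in> F) \<and>
     (\<forall>x\<in>F. \<forall>y\<in>carrier A. mt A x y = x \<longrightarrow> y \<in> F) \<and> bot_el \<notin> F"

lemma principal_proper_filter:
  assumes c: "c \<in> carrier A" "c \<noteq> bot_el"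
  shows "proper_filter {y \<in> carrier A. mt A c y = c}"
  unfolding proper_filter_def
proof (intro conjI ballI impI)
  show "bot_el \<notin> {y \<in> carrier A. mt A c y = c}"
    using c bot_closed bot_mt[of c] mt_comm[of c bot_el] by auto
next
  fix x y assume "x \<in> {y \<in> carrier A. mt A c y = c}" "y \<in> {y \<in> carrier A. mt A c y = c}"
  then show "mt A x y \<in> {y \<in> carrier A. mt A c y = c}"
    using c by (metis (mono_tags, lifting) mem_Collect_eq mt_assoc mt_closed)
next
  fix x y assume "x \<in> {y \<in> carrier A. mt A c y = c}" "y \<in> carrier A" "mt A x y = x"
  then show "y \<in> {y \<in> carrier A. mt A c y = c}"
    using c by (metis (mono_tags, lifting) mem_Collect_eq mt_assoc)
qed auto

lemma proper_filter_Union_chain: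
  assumes chain: "subset.chain {F. proper_filter F} CC"
  shows "proper_filter (\<Union>CC)"
proof -
  have filt: "\<And>F. F \<in> CC \<Longrightarrow> proper_filter F" and
    comparable: "\<And>F G. F \<in> CC \<Longrightarrow> G \<in> CC \<Longrightarrow> F \<subseteq> G \<or> G \<subseteq> F"
    using chain by (auto simp: subset_chain_def)
  have "mt A x y \<in> \<Union>CC" if "x \<in> F" "y \<in> G" "F \<in> CC" "G \<in> CC" for x y F G
    using comparable[OF that(3,4)] filt[OF that(3)] filt[OF that(4)] that
    unfolding proper_filter_def by blast
  moreover have "y \<in> \<Union>CC" if "x \<in> F" "F \<in> CC" "y \<in> carrier A" "mt A x y = x" for x y F
    using filt[OF that(2)] that unfolding proper_filter_def by blast
  moreover have "\<Union>CC \<subseteq> carrier A" "bot_el \<notin> \<Union>CC"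
    using filt unfolding proper_filter_def by blast+
  ultimately show ?thesis
    unfolding proper_filter_def by blast
qed

lemma proper_filter_extend:
  assumes M: "proper_filter M" "M \<noteq> {}" and x: "x \<in> carrier A" "cp A x \<notin> M"
  \<comment> \<open>the filter generated by M and x\<close>
  defines "M' \<equiv> {y \<in> carrier A. \<exists>p\<in>M. mt A (mt A p x) y = mt A p x}"
  shows "proper_filter M'" and "M \<subseteq> M'" and "x \<in> M'"
proof -
  have MC: "M \<subseteq> carrier A" using M by (simp add: proper_filter_def)
  have "mt A (mt A p x) p = mt A p x" "mt A (mt A p x) x = mt A p x" if "p \<in> M" for p
    using that MC x by (simp_all add: mt_ac subset_iff)
  with MC M(2) x show "M \<subseteq> M'" and "x \<in> M'"
    unfolding M'_def by blast+
  have "bot_el \<notin> M'"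
  proof
    assume "bot_el \<in> M'"
    then obtain p where p: "p \<in> M" "mt A (mt A p x) bot_el = mt A p x"
      by (auto simp: M'_def)
    with MC x have "mt A p x = bot_el"
      by (metis bot_mt mt_comm bot_closed mt_closed subsetD)
    with p MC x have "mt A p (cp A x) = p"
      by (simp add: mt_cp_if_disjoint subset_iff)
    with M p x show False
      by (auto simp: proper_filter_def cp_closed)
  qed
  moreover have "mt A y1 y2 \<in> M'" if y: "y1 \<in> M'" "y2 \<in> M'" for y1 y2
  proof -
    obtain p1 p2 where p: "p1 \<in> M" "p2 \<in> M" "y1 \<in> carrier A" "y2 \<in> carrier A"
      "mt A (mt A p1 x) y1 = mt A p1 x" "mt A (mt A p2 x) y2 = mt A p2 x"
      using y by (auto simp: M'_def)
    have pC: "p1 \<in> carrier A" "p2 \<in> carrier A" using p MC by auto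
    have "mt A (mt A (mt A p1 p2) x) (mt A y1 y2) = mt A (mt A (mt A p1 x) y1) (mt A (mt A p2 x) y2)"
      using pC p(3,4) x by (simp add: mt_ac)
    also have "\<dots> = mt A (mt A p1 p2) x"
      using pC x by (simp add: p(5,6) mt_ac)
    finally show ?thesis
      using M p by (auto simp: M'_def proper_filter_def mt_closed)
  qed
  moreover have "y \<in> M'" if "y1 \<in> M'" "y \<in> carrier A" "mt A y1 y = y1" for y1 y
    using that MC x by (auto simp: M'_def) (metis mt_assoc mt_closed subsetD)
  ultimately show "proper_filter M'"
    unfolding proper_filter_def M'_def by blast
qed

lemma ultrafilter_exists:
  assumes c: "c \<in> carrier A" "c \<noteq> bot_el"
  shows "\<exists>M. proper_filter M \<and> c \<in> M \<and> (\<forall>x\<in>carrier A. x \<in> M \<or> cp A x \<in> M)"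
proof -
  let ?F = "{F. proper_filter F \<and> c \<in> F}"
  have "\<exists>M\<in>?F. \<forall>F\<in>?F. M \<subseteq> F \<longrightarrow> F = M"
  proof (rule subset_Zorn_nonempty)
    show "?F \<noteq> {}"
      using principal_proper_filter[OF c] c by (auto simp: mt_idem)
    fix CC assume "CC \<noteq> {}" "subset.chain ?F CC"
    moreover from this have "subset.chain {F. proper_filter F} CC"
      by (auto simp: subset_chain_def)
    ultimately show "\<Union>CC \<in> ?F"
      using proper_filter_Union_chain by (auto simp: subset_chain_def)
  qed
  then obtain M where M: "proper_filter M" "c \<in> M"
    and maximal: "\<And>F. proper_filter F \<Longrightarrow> M \<subseteq> F \<Longrightarrow> F = M"
    by blast
  have "x \<in> M \<or> cp A x \<in> M" if "x \<in> carrier A" for x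
    using proper_filter_extend[OF M(1) _ that] maximal M(2) by blast
  with M show ?thesis by blast
qed

lemma ultrafilter_bool_hom:
  assumes M: "proper_filter M" and ultra: "\<forall>x\<in>carrier A. x \<in> M \<or> cp A x \<in> M"
  shows "bool_hom A (\<lambda>x. x \<in> M)"
proof -
  have meet: "\<And>x y. x \<in> M \<Longrightarrow> y \<in> M \<Longrightarrow> mt A x y \<in> M"
    and up: "\<And>x y. x \<in> M \<Longrightarrow> y \<in> carrier A \<Longrightarrow> mt A x y = x \<Longrightarrow> y \<in> M"
    and bot: "bot_el \<notin> M"
    using M unfolding proper_filter_def by blast+
  have "(mt A x y \<in> M) = (x \<in> M \<and> y \<in> M)" if xy: "x \<in> carrier A" "y \<in> carrier A" for x y
  proof -
    have "mt A (mt A x y) x = mt A x y" "mt A (mt A x y) y = mt A x y"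
      using xy by (simp_all add: mt_ac)
    then show ?thesis
      using meet up[of "mt A x y"] xy by blast
  qed
  moreover have "(cp A x \<in> M) = (x \<notin> M)" if x: "x \<in> carrier A" for x
    using meet[of x "cp A x"] mt_cp_self[OF x] bot ultra x by auto
  ultimately show ?thesis
    unfolding bool_hom_def by blast
qed

lemma separating_bool_hom:
  assumes "a \<in> carrier A" "b \<in> carrier A" "a \<noteq> b"
  shows "\<exists>f. bool_hom A f \<and> f a \<noteq> f b"
proof -
  have *: "\<exists>f. bool_hom A f \<and> f a \<and> \<not> f b"
    if ab: "a \<in> carrier A" "b \<in> carrier A" "mt A a (cp A b) \<noteq> bot_el" for a b
  proof -
    have "mt A a (cp A b) \<in> carrier A"
      using ab by (simp add: carrier_closed)
    then obtain M where M: "proper_filter M" "mt A a (cp A b) \<in> M"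
      and ultra: "\<forall>x\<in>carrier A. x \<in> M \<or> cp A x \<in> M"
      using ultrafilter_exists ab(3) by blast
    have hom: "bool_hom A (\<lambda>x. x \<in> M)"
      using ultrafilter_bool_hom[OF M(1) ultra] .
    then have "a \<in> M" "b \<notin> M"
      using M(2) ab by (auto simp: bool_hom_def cp_closed)
    with hom show ?thesis by blast
  qed
  from distinct_imp_mt_cp_nonbot[OF assms] show ?thesis
    using *[of a b] *[of b a] assms by blast
qed

end

section \<open>Words of transpositions\<close>

lemma word_ok_Nil [simp]: "word_ok []"
  by (simp add: word_ok_def)

lemma word_ok_Cons [simp]: "word_ok ((i, j) # w) \<longleftrightarrow> i \<noteq> j \<and> word_ok w"
  by (simp add: word_ok_def)

lemma word_ok_append [simp]: "word_ok (v @ w) \<longleftrightarrow> word_ok v \<and> word_ok w"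
  by (auto simp: word_ok_def)

lemma word_app_Nil [simp]: "word_app A [] x = x"
  by (simp add: word_app_def)

lemma word_app_Cons [simp]: "word_app A ((i, j) # w) x = sb A i j (word_app A w x)"
  by (simp add: word_app_def)

lemma word_app_append: "word_app A (v @ w) x = word_app A v (word_app A w x)"
  by (simp add: word_app_def)

lemma word_perm_Nil [simp]: "word_perm [] = id"
  by (simp add: word_perm_def)

lemma word_perm_Cons [simp]: "word_perm ((i, j) # w) = transp i j \<circ> word_perm w"
  by (simp add: word_perm_def)

lemma word_perm_append: "word_perm (v @ w) = word_perm v \<circ> word_perm w"
  by (induction v) (auto simp: comp_assoc)

lemma word_perm_finitary: "word_perm w \<in> finitary"
proof (induction w)
  case (Cons p w)
  obtain i j where p: "p = (i, j)" by (cases p)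
  have "{k. (transp i j \<circ> word_perm w) k \<noteq> k} \<subseteq> {k. word_perm w k \<noteq> k} \<union> {i, j}"
    by (auto simp: transp_def)
  with Cons show ?case
    by (simp add: p finitary_def finite_subset)
qed (simp add: finitary_def)

definition word_perms :: "('i \<Rightarrow> 'i) set" where
  "word_perms = word_perm ` {w. word_ok w}"

lemma word_perms_finitary: "word_perms \<subseteq> finitary"
  using word_perm_finitary by (auto simp: word_perms_def)

lemma id_in_word_perms: "id \<in> word_perms"
  unfolding word_perms_def by (metis word_ok_Nil word_perm_Nil image_eqI mem_Collect_eq)

lemma word_perm_snoc: "word_perm (w @ [(i, j)]) = word_perm w \<circ> transp i j"
  by (simp add: word_perm_append)

lemma permutable_word_perms: "permutable word_perms"
  unfolding permutable_def word_perms_def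
proof (intro ballI allI impI)
  fix s :: "'i \<Rightarrow> 'i" and i j :: 'i assume "s \<in> word_perm ` {w. word_ok w}" "i \<noteq> j"
  then obtain w where "word_ok (w @ [(i, j)])" "s \<circ> transp i j = word_perm (w @ [(i, j)])"
    by (auto simp: word_perm_snoc)
  then show "s \<circ> transp i j \<in> word_perm ` {w. word_ok w}" by blast
qed

lemma word_app_closed:
  "talg_wf A \<Longrightarrow> word_ok w \<Longrightarrow> x \<in> carrier A \<Longrightarrow> word_app A w x \<in> carrier A"
  by (induction w) (auto simp: talg_wf_def)

lemma word_app_mt:
  assumes "talg_wf A" "endo_ax A" "word_ok w" "x \<in> carrier A" "y \<in> carrier A"
  shows "word_app A w (mt A x y) = mt A (word_app A w x) (word_app A w y)"
  using assms by (induction w) (auto simp: endo_ax_def word_app_closed)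

lemma word_app_cp:
  assumes "talg_wf A" "endo_ax A" "word_ok w" "x \<in> carrier A"
  shows "word_app A w (cp A x) = cp A (word_app A w x)"
  using assms by (induction w) (auto simp: endo_ax_def word_app_closed)

lemma word_app_wp:
  assumes "permutable V" "word_ok w" "X \<subseteq> V"
  shows "word_app (wp V) w X = {q \<in> V. q \<circ> word_perm w \<in> X}"
  using assms(2)
proof (induction w)
  case (Cons p w)
  obtain i j where p: "p = (i, j)" by (cases p)
  with Cons assms(1) show ?case
    by (auto simp: wp_def permutable_def comp_assoc)
qed (use assms(3) in auto)

section \<open>Equations valid in every wp(V)\<close>

lemma PTA_eval_eq:
  fixes A :: "('i, 'b) talg"
  assumes A: "A \<in> PTA" and wf_trms: "wf_trm t1" "wf_trm t2"
    and valid: "\<And>(V :: ('i \<Rightarrow> 'i) set) \<tau>. permutable V \<Longrightarrow> \<forall>n. \<tau> n \<subseteq> V \<Longrightarrow>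
        eval (wp V) \<tau> t1 = eval (wp V) \<tau> t2"
    and \<sigma>: "\<forall>n. \<sigma> n \<in> carrier A"
  shows "eval A \<sigma> t1 = eval A \<sigma> t2"
proof -
  have "holds (wp V) t1 t2" if "permutable V" for V :: "('i \<Rightarrow> 'i) set"
    using valid[OF that] by (auto simp: holds_def wp_def)
  with A wf_trms have "holds A t1 t2"
    unfolding PTA_def by blast
  with \<sigma> show ?thesis
    unfolding holds_def by blast
qed

lemma PTA_boolean_ax:
  fixes A :: "('i, 'b) talg"
  assumes A: "A \<in> PTA"
  shows "boolean_ax A"
  unfolding boolean_ax_def
proof (intro ballI)
  fix x y z assume "x \<in> carrier A" "y \<in> carrier A" "z \<in> carrier A"
  define \<sigma> where "\<sigma> n = (if n = 0 then x else if n = 1 then y else z)" for n :: nat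
  have \<sigma>: "\<forall>n. \<sigma> n \<in> carrier A"
    using \<open>x \<in> carrier A\<close> \<open>y \<in> carrier A\<close> \<open>z \<in> carrier A\<close> by (simp add: \<sigma>_def)
  define J where "J s t = Cp (Mt (Cp s) (Cp t))" for s t :: "'i trm"
  let ?X = "Var 0" and ?Y = "Var 1" and ?Z = "Var 2"
  have vars: "\<sigma> 0 = x" "\<sigma> 1 = y" "\<sigma> 2 = z"
    by (simp_all add: \<sigma>_def)
  have eval_J: "eval A \<sigma> (J s t) = jn A (eval A \<sigma> s) (eval A \<sigma> t)" for s t
    by (simp add: J_def jn_def)
  have eqs: "eval A \<sigma> (Mt ?X ?Y) = eval A \<sigma> (Mt ?Y ?X)"
    "eval A \<sigma> (J ?X ?Y) = eval A \<sigma> (J ?Y ?X)"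
    "eval A \<sigma> (Mt (Mt ?X ?Y) ?Z) = eval A \<sigma> (Mt ?X (Mt ?Y ?Z))"
    "eval A \<sigma> (J (J ?X ?Y) ?Z) = eval A \<sigma> (J ?X (J ?Y ?Z))"
    "eval A \<sigma> (Mt ?X (J ?X ?Y)) = eval A \<sigma> ?X"
    "eval A \<sigma> (J ?X (Mt ?X ?Y)) = eval A \<sigma> ?X"
    "eval A \<sigma> (Mt ?X (J ?Y ?Z)) = eval A \<sigma> (J (Mt ?X ?Y) (Mt ?X ?Z))"
    "eval A \<sigma> (Mt ?X (Cp ?X)) = eval A \<sigma> (Mt ?Y (Cp ?Y))"
    "eval A \<sigma> (J ?X (Cp ?X)) = eval A \<sigma> (J ?Y (Cp ?Y))"
    "eval A \<sigma> (Mt (Mt ?X (Cp ?X)) ?Y) = eval A \<sigma> (Mt ?X (Cp ?X))"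
    "eval A \<sigma> (Mt (J ?X (Cp ?X)) ?Y) = eval A \<sigma> ?Y"
    by (rule PTA_eval_eq[OF A _ _ _ \<sigma>]; auto simp: J_def wp_def)+
  from eqs[unfolded eval_J eval.simps vars] show "mt A x y = mt A y x \<and> jn A x y = jn A y x \<and>
      mt A (mt A x y) z = mt A x (mt A y z) \<and> jn A (jn A x y) z = jn A x (jn A y z) \<and>
      mt A x (jn A x y) = x \<and> jn A x (mt A x y) = x \<and>
      mt A x (jn A y z) = jn A (mt A x y) (mt A x z) \<and>
      mt A x (cp A x) = mt A y (cp A y) \<and> jn A x (cp A x) = jn A y (cp A y) \<and>
      mt A (mt A x (cp A x)) y = mt A x (cp A x) \<and>
      mt A (jn A x (cp A x)) y = y"
    by blast
qed

lemma PTA_endo_ax: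
  fixes A :: "('i, 'b) talg"
  assumes A: "A \<in> PTA"
  shows "endo_ax A"
  unfolding endo_ax_def
proof (intro allI impI ballI conjI)
  fix i j :: 'i and x y assume ij: "i \<noteq> j" and "x \<in> carrier A" "y \<in> carrier A"
  define \<sigma> where "\<sigma> n = (if n = 0 then x else y)" for n :: nat
  have \<sigma>: "\<forall>n. \<sigma> n \<in> carrier A"
    using \<open>x \<in> carrier A\<close> \<open>y \<in> carrier A\<close> by (simp add: \<sigma>_def)
  have "eval A \<sigma> (Sb i j (Mt (Var 0) (Var 1))) = eval A \<sigma> (Mt (Sb i j (Var 0)) (Sb i j (Var 1)))"
    "eval A \<sigma> (Sb i j (Cp (Var 0))) = eval A \<sigma> (Cp (Sb i j (Var 0)))"
    by (rule PTA_eval_eq[OF A _ _ _ \<sigma>]; auto simp: ij wp_def permutable_def)+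
  then show "sb A i j (mt A x y) = mt A (sb A i j x) (sb A i j y)"
    and "sb A i j (cp A x) = cp A (sb A i j x)"
    by (simp_all add: \<sigma>_def)
qed

definition word_trm :: "('i \<times> 'i) list \<Rightarrow> 'i trm" where
  "word_trm w = foldr (\<lambda>(i, j) t. Sb i j t) w (Var 0)"

lemma wf_word_trm: "word_ok w \<Longrightarrow> wf_trm (word_trm w)"
  by (induction w) (auto simp: word_trm_def)

lemma eval_word_trm: "eval A \<sigma> (word_trm w) = word_app A w (\<sigma> 0)"
  by (induction w) (auto simp: word_trm_def word_app_def)

lemma PTA_word_ax:
  fixes A :: "('i, 'b) talg"
  assumes A: "A \<in> PTA"
  shows "word_ax A"
  unfolding word_ax_def
proof (intro allI impI ballI)
  fix v w :: "('i \<times> 'i) list" and x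
  assume vw: "word_ok v \<and> word_ok w \<and> word_perm v = word_perm w" and "x \<in> carrier A"
  then have "eval A (\<lambda>_. x) (word_trm v) = eval A (\<lambda>_. x) (word_trm w)"
    by (intro PTA_eval_eq[OF A]) (simp_all add: wf_word_trm eval_word_trm word_app_wp)
  then show "word_app A v x = word_app A w x"
    by (simp add: eval_word_trm)
qed

lemma PTA_subset_TA: "PTA \<subseteq> TA"
  using PTA_boolean_ax PTA_endo_ax PTA_word_ax by (auto simp: TA_def PTA_def)

section \<open>Models of Sigma are representable\<close>

lemma eval_closed:
  "talg_wf A \<Longrightarrow> wf_trm t \<Longrightarrow> \<forall>n. \<sigma> n \<in> carrier A \<Longrightarrow> eval A \<sigma> t \<in> carrier A"
  by (induction t) (auto simp: talg_wf_def)

locale transposition_algebra =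
  fixes A :: "('i, 'b) talg"
  assumes TA: "A \<in> TA"
begin

sublocale boolean_talg A
  using TA by unfold_locales (simp_all add: TA_def)

lemma endo: "endo_ax A" and words: "word_ax A"
  using TA by (simp_all add: TA_def)

definition perm_act :: "('i \<Rightarrow> 'i) \<Rightarrow> 'b \<Rightarrow> 'b" where
  "perm_act q x = word_app A (SOME w. word_ok w \<and> word_perm w = q) x"

lemma perm_act_word_perm:
  assumes "word_ok w" "x \<in> carrier A"
  shows "perm_act (word_perm w) x = word_app A w x"
proof -
  have "\<exists>v. word_ok v \<and> word_perm v = word_perm w"
    using assms(1) by blast
  then have "word_ok (SOME v. word_ok v \<and> word_perm v = word_perm w) \<and>
      word_perm (SOME v. word_ok v \<and> word_perm v = word_perm w) = word_perm w"
    by (rule someI_ex)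
  with words assms show ?thesis
    unfolding perm_act_def word_ax_def by blast
qed

lemma perm_act_id: "x \<in> carrier A \<Longrightarrow> perm_act id x = x"
  using perm_act_word_perm[of "[]"] by simp

lemma word_permsE:
  assumes "q \<in> word_perms"
  obtains w where "word_ok w" "q = word_perm w"
  using assms by (auto simp: word_perms_def)

lemma perm_act_closed: "q \<in> word_perms \<Longrightarrow> x \<in> carrier A \<Longrightarrow> perm_act q x \<in> carrier A"
  by (metis word_permsE perm_act_word_perm word_app_closed wf)

lemma perm_act_mt:
  "q \<in> word_perms \<Longrightarrow> x \<in> carrier A \<Longrightarrow> y \<in> carrier A \<Longrightarrow>
    perm_act q (mt A x y) = mt A (perm_act q x) (perm_act q y)"
  by (metis word_permsE perm_act_word_perm word_app_mt wf endo mt_closed)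

lemma perm_act_cp:
  "q \<in> word_perms \<Longrightarrow> x \<in> carrier A \<Longrightarrow> perm_act q (cp A x) = cp A (perm_act q x)"
  by (metis word_permsE perm_act_word_perm word_app_cp wf endo cp_closed)

lemma perm_act_sb:
  assumes q: "q \<in> word_perms" and ij: "i \<noteq> j" and x: "x \<in> carrier A"
  shows "perm_act q (sb A i j x) = perm_act (q \<circ> transp i j) x"
proof -
  obtain w where w: "word_ok w" "q = word_perm w"
    using q by (rule word_permsE)
  have "sb A i j x \<in> carrier A"
    using wf ij x by (simp add: talg_wf_def)
  with w have "perm_act q (sb A i j x) = word_app A (w @ [(i, j)]) x"
    by (simp add: perm_act_word_perm word_app_append)
  also have "\<dots> = perm_act (q \<circ> transp i j) x"
    using w ij x perm_act_word_perm[of "w @ [(i, j)]" x] by (simp add: word_perm_snoc)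
  finally show ?thesis .
qed

definition represent :: "('b \<Rightarrow> bool) \<Rightarrow> 'b \<Rightarrow> ('i \<Rightarrow> 'i) set" where
  "represent f x = {q \<in> word_perms. f (perm_act q x)}"

lemma id_in_represent: "x \<in> carrier A \<Longrightarrow> id \<in> represent f x \<longleftrightarrow> f x"
  by (simp add: represent_def id_in_word_perms perm_act_id)

lemma represent_mt:
  assumes "bool_hom A f" "x \<in> carrier A" "y \<in> carrier A"
  shows "represent f (mt A x y) = represent f x \<inter> represent f y"
  using assms by (auto simp: represent_def bool_hom_def perm_act_mt perm_act_closed)

lemma represent_cp:
  assumes "bool_hom A f" "x \<in> carrier A"
  shows "represent f (cp A x) = word_perms - represent f x"
  using assms by (auto simp: represent_def bool_hom_def perm_act_cp perm_act_closed)

lemma represent_sb: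
  assumes "i \<noteq> j" "x \<in> carrier A"
  shows "represent f (sb A i j x) = {q \<in> word_perms. q \<circ> transp i j \<in> represent f x}"
  using assms permutable_word_perms
  by (auto simp: represent_def permutable_def perm_act_sb)

lemma represent_eval:
  assumes f: "bool_hom A f" and "wf_trm t" and \<sigma>: "\<forall>n. \<sigma> n \<in> carrier A"
  shows "represent f (eval A \<sigma> t) = eval (wp word_perms) (represent f \<circ> \<sigma>) t"
  using assms(2)
proof (induction t)
  case (Mt s t)
  then show ?case
    using eval_closed[OF wf _ \<sigma>] by (simp add: represent_mt[OF f] wp_def)
next
  case (Cp t)
  then show ?case
    using eval_closed[OF wf _ \<sigma>] by (simp add: represent_cp[OF f] wp_def)
next
  case (Sb i j t)
  then show ?case
    using eval_closed[OF wf _ \<sigma>] by (simp add: represent_sb wp_def)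
qed simp

lemma holds_if_holds_in_wp_word_perms:
  assumes wf_trms: "wf_trm t1" "wf_trm t2" and valid: "holds (wp word_perms) t1 t2"
  shows "holds A t1 t2"
  unfolding holds_def
proof (intro allI impI)
  fix \<sigma> :: "nat \<Rightarrow> 'b" assume \<sigma>: "\<forall>n. \<sigma> n \<in> carrier A"
  show "eval A \<sigma> t1 = eval A \<sigma> t2"
  proof (rule ccontr)
    assume "eval A \<sigma> t1 \<noteq> eval A \<sigma> t2"
    moreover have evals_closed: "eval A \<sigma> t1 \<in> carrier A" "eval A \<sigma> t2 \<in> carrier A"
      using eval_closed wf wf_trms \<sigma> by auto
    ultimately obtain f where f: "bool_hom A f" "f (eval A \<sigma> t1) \<noteq> f (eval A \<sigma> t2)"
      using separating_bool_hom by blast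
    have "\<forall>n. (represent f \<circ> \<sigma>) n \<in> carrier (wp word_perms)"
      by (auto simp: wp_def represent_def)
    with valid have "represent f (eval A \<sigma> t1) = represent f (eval A \<sigma> t2)"
      using represent_eval[OF f(1)] wf_trms \<sigma> unfolding holds_def by simp
    with f(2) evals_closed show False
      by (metis id_in_represent)
  qed
qed

end

lemma TA_subset_PTA: "TA \<subseteq> PTA"
proof
  fix A :: "('i, 'b) talg" assume "A \<in> TA"
  then interpret transposition_algebra A by unfold_locales
  show "A \<in> PTA"
    using wf holds_if_holds_in_wp_word_perms word_perms_finitary permutable_word_perms
    unfolding PTA_def by blast
qed

theorem theorem3p26:
  assumes "infinite (UNIV :: 'i set)"
  shows "(TA :: ('i, 'b) talg set) = PTA"
  using TA_subset_PTA PTA_subset_TA by blast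

end
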